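(* For complex numbers $x_0,\dots,x_q$ (repetitions allowed) and $\tau\in\mathbb{R}$, $$\sum_{\substack{i,j=0\\ i\le j}}^{q}x_i\,e^{-\tau[x_0,\ldots,x_q,x_i,x_j]}=\begin{cases}\dfrac{\tau^2x_0}{2}e^{-\tau[x_0,\ldots,x_q]}+\dfrac{\tau^2}{2}e^{-\tau[x_1,\ldots,x_q]}-\displaystyle\sum_{i=1}^{q}i\,e^{-\tau[x_0,\ldots,x_q,x_i]}, & q>0,\\[2mm] \dfrac{\tau^2x_0}{2}e^{-\tau x_0}, & q=0.\end{cases}$$
   Context: For $t\in\mathbb{R}$ and numbers $y_0,\dots,y_p$ (repetitions allowed), $e^{t[y_0,\ldots,y_p]}$ denotes the divided difference of $f(x)=e^{tx}$, $f[y_0,\ldots,y_p]=\frac{1}{2\pi i}\oint_\Gamma\frac{f(x)}{\prod_{i=0}^p(x-y_i)}\,\mathrm{d}x$, $\Gamma$ a positively oriented contour enclosing all $y_i$. Multisets such as $[x_0,\ldots,x_q,x_i,x_j]$ contain the listed extra copies of repeated entries. *)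

theory Defs
  imports "HOL-Complex_Analysis.Complex_Analysis"
begin

text \<open>Divided difference of an entire function f at the multiset of nodes ys (given as a list,
repetitions allowed), defined as in the paper by the contour integral
  f[y_0,...,y_p] = 1/(2 pi i) \<ointegral>_\<Gamma> f(z) / \<Prod>(z - y_i) dz,
where the contour \<Gamma> is taken to be the positively oriented circle centred at 0 whose radius
exceeds the modulus of every node (so it encloses all nodes).\<close>

definition divdiff :: "(complex \<Rightarrow> complex) \<Rightarrow> complex list \<Rightarrow> complex" where
  "divdiff f ys =
     contour_integral (circlepath 0 (1 + sum_list (map norm ys)))
       (\<lambda>z. f z / prod_list (map (\<lambda>y. z - y) ys)) / (2 * of_real pi * \<i>)"

definition expdd :: "real \<Rightarrow> complex list \<Rightarrow> complex" where
  "expdd t ys = divdiff (\<lambda>z. exp (complex_of_real t * z)) ys"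

end

(*
  With P the node polynomial, every identity between rational multiples of f/P that holds on a
  circle enclosing the nodes integrates to an identity between divided differences. Thus
  z/(z - y) = 1 + y/(z - y) gives (z f)[y, ys] = y f[y, ys] + f[ys], and integrating the
  derivative of f/P over the closed circle gives f'[ys] = \<Sum>_{y \<in> ys} f[ys, y]. Applying the
  latter twice, f''[xs] = 2 \<Sum>_{i \<le> j} f[xs, x_i, x_j]. Peeling x_i off the left-hand side with
  the first rule and using (z f)'' = 2 f' + z f'' yields, for every entire f,
    \<Sum>_{i \<le> j} x_i f[xs, x_i, x_j] = (z f'')[xs]/2 - \<Sum>_j j f[xs, x_j].
  For f = e^{-\<tau> z} one has z f'' = \<tau>^2 z f, and (z f)[x_0, ..., x_q] = x_0 f[x_0, ..., x_q] + f[x_1, ..., x_q].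
*)
theory Submission
  imports Defs
begin

definition node_poly :: "complex list \<Rightarrow> complex \<Rightarrow> complex" where
  "node_poly ys z = (\<Prod>y\<leftarrow>ys. z - y)"

lemma node_poly_Nil [simp]: "node_poly [] z = 1"
  and node_poly_Cons [simp]: "node_poly (y # ys) z = (z - y) * node_poly ys z"
  and node_poly_append [simp]: "node_poly (ys @ zs) z = node_poly ys z * node_poly zs z"
  by (simp_all add: node_poly_def)

lemma node_poly_eq_0_iff [simp]: "node_poly ys z = 0 \<longleftrightarrow> z \<in> set ys"
  by (induction ys) auto

lemma node_poly_mset: "mset ys = mset zs \<Longrightarrow> node_poly ys = node_poly zs"
  unfolding node_poly_def by (metis mset_map prod_mset_prod_list)

lemma holomorphic_on_node_poly [holomorphic_intros]: "node_poly ys holomorphic_on S"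
  by (induction ys) (auto intro!: holomorphic_intros)

lemma homotopic_loops_circlepath_radii:
  assumes "0 < r1" "0 < r2" and inside: "\<And>y. y \<in> K \<Longrightarrow> norm y < min r1 r2"
  shows "homotopic_loops (- K) (circlepath 0 r1) (circlepath 0 r2)"
proof (rule homotopic_loops_linear)
  fix t :: real
  show "closed_segment (circlepath 0 r1 t) (circlepath 0 r2 t) \<subseteq> - K"
  proof
    fix w assume "w \<in> closed_segment (circlepath 0 r1 t) (circlepath 0 r2 t)"
    then obtain u where u: "0 \<le> u" "u \<le> 1"
      and w: "w = (1 - u) *\<^sub>R circlepath 0 r1 t + u *\<^sub>R circlepath 0 r2 t"
      by (auto simp: closed_segment_def)
    define s where "s = (1 - u) * r1 + u * r2"
    have "w = of_real s * exp (2 * of_real pi * \<i> * of_real t)"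
      unfolding w circlepath s_def by (simp add: scaleR_conv_of_real algebra_simps)
    moreover have "min r1 r2 \<le> s"
    proof -
      have "(1 - u) * min r1 r2 \<le> (1 - u) * r1" "u * min r1 r2 \<le> u * r2"
        using u by (simp_all add: mult_left_mono)
      then show ?thesis unfolding s_def by (simp add: algebra_simps)
    qed
    ultimately have "min r1 r2 \<le> norm w"
      using assms by (simp add: norm_mult norm_exp)
    then show "w \<in> - K" using inside by force
  qed
qed auto

definition node_radius :: "complex list \<Rightarrow> real" where
  "node_radius ys = 1 + sum_list (map norm ys)"

lemma node_radius_pos: "0 < node_radius ys"
  unfolding node_radius_def by (intro add_pos_nonneg sum_list_nonneg) auto

lemma norm_less_node_radius: "y \<in> set ys \<Longrightarrow> norm y < node_radius ys"
  using member_le_sum_list[of "norm y" "map norm ys"] unfolding node_radius_def by fastforce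

lemma path_image_circlepath_node_radius: "path_image (circlepath 0 (node_radius ys)) \<subseteq> - set ys"
  using norm_less_node_radius node_radius_pos[of ys]
  by (fastforce simp: path_image_circlepath_nonneg)

lemma divdiff_node_radius:
  "divdiff f ys = contour_integral (circlepath 0 (node_radius ys)) (\<lambda>z. f z / node_poly ys z)
     / (2 * of_real pi * \<i>)"
  by (simp add: divdiff_def node_radius_def node_poly_def)

lemma has_contour_integral_divdiff:
  assumes f: "f holomorphic_on UNIV" and "0 < r" and inside: "\<And>y. y \<in> set ys \<Longrightarrow> norm y < r"
  shows "((\<lambda>z. f z / node_poly ys z) has_contour_integral (2 * of_real pi * \<i> * divdiff f ys))
           (circlepath 0 r)"
proof -
  define R where "R = node_radius ys"
  define h where "h = (\<lambda>z. f z / node_poly ys z)"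
  have "homotopic_loops (- set ys) (circlepath 0 R) (circlepath 0 r)"
    using \<open>0 < r\<close> inside node_radius_pos norm_less_node_radius
    by (intro homotopic_loops_circlepath_radii) (auto simp: R_def)
  moreover have h: "h holomorphic_on - set ys"
    unfolding h_def by (auto intro!: holomorphic_intros holomorphic_on_subset[OF f])
  moreover have "open (- set ys)"
    by (simp add: finite_imp_closed open_Compl)
  ultimately have "contour_integral (circlepath 0 R) h = contour_integral (circlepath 0 r) h"
    by (intro Cauchy_theorem_homotopic_loops) auto
  moreover have "h contour_integrable_on circlepath 0 r"
    using \<open>0 < r\<close> inside \<open>open (- set ys)\<close>
    by (intro contour_integrable_holomorphic_simple[OF h]) (fastforce simp: path_image_circlepath_nonneg)+
  ultimately show ?thesis
    using has_contour_integral_integral by (fastforce simp: divdiff_node_radius R_def h_def)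
qed

lemma divdiff_eqI:
  assumes "f holomorphic_on UNIV" "0 < r" "\<And>y. y \<in> set ys \<Longrightarrow> norm y < r"
    and "((\<lambda>z. f z / node_poly ys z) has_contour_integral (2 * of_real pi * \<i> * c)) (circlepath 0 r)"
  shows "divdiff f ys = c"
  using has_contour_integral_unique[OF has_contour_integral_divdiff[OF assms(1-3)] assms(4)] by simp

lemma divdiff_mset:
  assumes "mset ys = mset zs"
  shows "divdiff f ys = divdiff f zs"
proof -
  have "node_radius ys = node_radius zs"
    using assms unfolding node_radius_def by (metis mset_map sum_mset_sum_list)
  then show ?thesis
    using node_poly_mset[OF assms] by (simp add: divdiff_node_radius)
qed

lemma divdiff_Nil:
  assumes "f holomorphic_on UNIV"
  shows "divdiff f [] = 0"
  by (rule divdiff_eqI[OF assms zero_less_one])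
     (auto intro: Cauchy_theorem_convex_simple[OF assms])

lemma divdiff_singleton:
  assumes "f holomorphic_on UNIV"
  shows "divdiff f [y] = f y"
proof (rule divdiff_eqI[OF assms])
  show "0 < norm y + 1"
    using norm_ge_zero[of y] by linarith
  show "\<And>w. w \<in> set [y] \<Longrightarrow> norm w < norm y + 1" by auto
  show "((\<lambda>z. f z / node_poly [y] z) has_contour_integral (2 * of_real pi * \<i> * f y))
          (circlepath 0 (norm y + 1))"
    using Cauchy_integral_circlepath_simple[OF holomorphic_on_subset[OF assms]] by simp
qed

lemma divdiff_add:
  assumes "f holomorphic_on UNIV" "g holomorphic_on UNIV"
  shows "divdiff (\<lambda>z. f z + g z) ys = divdiff f ys + divdiff g ys"
proof (rule divdiff_eqI[OF _ node_radius_pos norm_less_node_radius])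
  show "(\<lambda>z. f z + g z) holomorphic_on UNIV"
    using assms by (intro holomorphic_intros)
  have "((\<lambda>z. f z / node_poly ys z + g z / node_poly ys z) has_contour_integral
          2 * of_real pi * \<i> * divdiff f ys + 2 * of_real pi * \<i> * divdiff g ys)
          (circlepath 0 (node_radius ys))"
    using assms node_radius_pos norm_less_node_radius
    by (intro has_contour_integral_add has_contour_integral_divdiff)
  then show "((\<lambda>z. (f z + g z) / node_poly ys z) has_contour_integral
          2 * of_real pi * \<i> * (divdiff f ys + divdiff g ys)) (circlepath 0 (node_radius ys))"
    by (simp add: add_divide_distrib distrib_left)
qed

lemma divdiff_cmult:
  assumes "f holomorphic_on UNIV"
  shows "divdiff (\<lambda>z. c * f z) ys = c * divdiff f ys"
proof (rule divdiff_eqI[OF _ node_radius_pos norm_less_node_radius])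
  show "(\<lambda>z. c * f z) holomorphic_on UNIV"
    using assms by (intro holomorphic_intros)
  have "((\<lambda>z. c * (f z / node_poly ys z)) has_contour_integral
          c * (2 * of_real pi * \<i> * divdiff f ys)) (circlepath 0 (node_radius ys))"
    using assms node_radius_pos norm_less_node_radius
    by (intro has_contour_integral_lmul has_contour_integral_divdiff)
  then show "((\<lambda>z. c * f z / node_poly ys z) has_contour_integral
          2 * of_real pi * \<i> * (c * divdiff f ys)) (circlepath 0 (node_radius ys))"
    by (simp add: mult_ac)
qed

lemma divdiff_times_id_Cons:
  assumes f: "f holomorphic_on UNIV"
  shows "divdiff (\<lambda>z. z * f z) (y # ys) = y * divdiff f (y # ys) + divdiff f ys"
proof (rule divdiff_eqI[OF _ node_radius_pos norm_less_node_radius])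
  show "(\<lambda>z. z * f z) holomorphic_on UNIV"
    using f by (intro holomorphic_intros)
  define C where "C = circlepath 0 (node_radius (y # ys))"
  have "((\<lambda>z. y * (f z / node_poly (y # ys) z) + f z / node_poly ys z) has_contour_integral
          y * (2 * of_real pi * \<i> * divdiff f (y # ys)) + 2 * of_real pi * \<i> * divdiff f ys) C"
    unfolding C_def using f node_radius_pos norm_less_node_radius
    by (intro has_contour_integral_add has_contour_integral_lmul has_contour_integral_divdiff) auto
  then have "((\<lambda>z. y * (f z / node_poly (y # ys) z) + f z / node_poly ys z) has_contour_integral
          2 * of_real pi * \<i> * (y * divdiff f (y # ys) + divdiff f ys)) C"
    by (simp add: algebra_simps)
  then show "((\<lambda>z. z * f z / node_poly (y # ys) z) has_contour_integral
          2 * of_real pi * \<i> * (y * divdiff f (y # ys) + divdiff f ys)) C"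
  proof (rule has_contour_integral_eq)
    fix z assume "z \<in> path_image C"
    then have "z \<notin> set (y # ys)"
      using path_image_circlepath_node_radius unfolding C_def by blast
    then show "y * (f z / node_poly (y # ys) z) + f z / node_poly ys z = z * f z / node_poly (y # ys) z"
      by (simp add: field_simps)
  qed
qed

lemma has_contour_integral_sum_list:
  "(\<And>y. y \<in> set ys \<Longrightarrow> (f y has_contour_integral i y) p)
    \<Longrightarrow> ((\<lambda>z. \<Sum>y\<leftarrow>ys. f y z) has_contour_integral (\<Sum>y\<leftarrow>ys. i y)) p"
  by (induction ys) (auto simp: has_contour_integral_0 has_contour_integral_add)

lemma has_field_derivative_divide_node_poly:
  assumes "(g has_field_derivative g') (at z)" "z \<notin> set ys"
  shows "((\<lambda>w. g w / node_poly ys w) has_field_derivative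
           g' / node_poly ys z - (\<Sum>y\<leftarrow>ys. g z / node_poly (ys @ [y]) z)) (at z)"
  using assms
proof (induction ys arbitrary: g g')
  case Nil
  then show ?case by simp
next
  case (Cons a ys)
  have "z \<noteq> a" "z \<notin> set ys"
    using Cons.prems by auto
  have "((\<lambda>w. g w / (w - a)) has_field_derivative g' / (z - a) - g z / (z - a)^2) (at z)"
    using Cons.prems(1) \<open>z \<noteq> a\<close>
    by (auto intro!: derivative_eq_intros simp: divide_simps power2_eq_square)
  from Cons.IH[OF this \<open>z \<notin> set ys\<close>] show ?case
    using \<open>z \<noteq> a\<close> \<open>z \<notin> set ys\<close>
    by (simp add: divide_divide_eq_left mult_ac power2_eq_square diff_divide_distrib diff_diff_eq)
qed

lemma holomorphic_on_UNIV_if_has_field_derivative: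
  assumes "\<And>z. (f has_field_derivative f' z) (at z)"
  shows "f holomorphic_on UNIV" "f' holomorphic_on UNIV"
proof -
  show f: "f holomorphic_on UNIV"
    using assms by (auto simp: holomorphic_on_def field_differentiable_def)
  have "f' = deriv f"
    by (intro ext DERIV_imp_deriv[OF assms, symmetric])
  then show "f' holomorphic_on UNIV"
    using holomorphic_deriv[OF f open_UNIV] by simp
qed

lemma divdiff_deriv:
  assumes f': "\<And>z. (f has_field_derivative f' z) (at z)"
  shows "divdiff f' ys = (\<Sum>y\<leftarrow>ys. divdiff f (ys @ [y]))"
proof -
  note hol = holomorphic_on_UNIV_if_has_field_derivative[OF f']
  define C where "C = circlepath 0 (node_radius ys)"
  define c where "c = 2 * of_real pi * \<i>"
  define F where "F = (\<lambda>w. f w / node_poly ys w)"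
  have "((\<lambda>z. f' z / node_poly ys z - (\<Sum>y\<leftarrow>ys. f z / node_poly (ys @ [y]) z))
          has_contour_integral F (pathfinish C) - F (pathstart C)) C"
  proof (rule contour_integral_primitive[where S = "- set ys"])
    fix z :: complex assume "z \<in> - set ys"
    then have "z \<notin> set ys" by simp
    show "(F has_field_derivative
        f' z / node_poly ys z - (\<Sum>y\<leftarrow>ys. f z / node_poly (ys @ [y]) z)) (at z within - set ys)"
      unfolding F_def
      by (rule has_field_derivative_at_within,
          rule has_field_derivative_divide_node_poly[OF f' \<open>z \<notin> set ys\<close>])
  qed (use path_image_circlepath_node_radius in \<open>auto simp: C_def\<close>)
  then have "((\<lambda>z. f' z / node_poly ys z - (\<Sum>y\<leftarrow>ys. f z / node_poly (ys @ [y]) z))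
          has_contour_integral 0) C"
    by (simp add: C_def)
  moreover have "((\<lambda>z. f' z / node_poly ys z - (\<Sum>y\<leftarrow>ys. f z / node_poly (ys @ [y]) z))
          has_contour_integral c * divdiff f' ys - (\<Sum>y\<leftarrow>ys. c * divdiff f (ys @ [y]))) C"
    unfolding C_def c_def using hol node_radius_pos norm_less_node_radius
    by (intro has_contour_integral_diff has_contour_integral_sum_list has_contour_integral_divdiff) auto
  ultimately have "c * divdiff f' ys - (\<Sum>y\<leftarrow>ys. c * divdiff f (ys @ [y])) = 0"
    using has_contour_integral_unique by blast
  then show ?thesis
    by (simp add: c_def sum_list_const_mult)
qed

lemma sum_list_map_map_upt: "(\<Sum>y\<leftarrow>map x [0..<n]. h y) = (\<Sum>k<n. h (x k))"
  by (simp add: interv_sum_list_conv_sum_set_nat atLeast0LessThan)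

lemma sum_symmetric_square_diagonal:
  fixes g :: "nat \<Rightarrow> nat \<Rightarrow> 'a::comm_semiring_1"
  assumes sym: "\<And>i j. g i j = g j i"
  shows "(\<Sum>j<n. \<Sum>i<n. g i j) + (\<Sum>j<n. g j j) = 2 * (\<Sum>j<n. \<Sum>i\<le>j. g i j)"
proof (induction n)
  case (Suc n)
  have "(\<Sum>j<n. g n j) = (\<Sum>i<n. g i n)"
    using sym by simp
  with Suc.IH show ?case
    by (simp add: sum.distrib lessThan_Suc_atMost[symmetric] algebra_simps mult_2)
qed simp

lemma divdiff_second_deriv:
  fixes x :: "nat \<Rightarrow> complex" and n :: nat
  assumes f': "\<And>z. (f has_field_derivative f' z) (at z)"
    and f'': "\<And>z. (f' has_field_derivative f'' z) (at z)"
  defines "xs \<equiv> map x [0..<n]"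
  shows "divdiff f'' xs = 2 * (\<Sum>j<n. \<Sum>i\<le>j. divdiff f (xs @ [x i, x j]))"
proof -
  define g where "g i j = divdiff f (xs @ [x i, x j])" for i j
  have sym: "g i j = g j i" for i j
    unfolding g_def by (rule divdiff_mset) simp
  have extended: "divdiff f' (xs @ [x j]) = (\<Sum>i<n. g i j) + g j j" for j
  proof -
    have "(\<Sum>y\<leftarrow>xs. divdiff f (xs @ [x j, y])) = (\<Sum>i<n. g j i)"
      unfolding g_def xs_def by (rule sum_list_map_map_upt)
    then show ?thesis
      using sym by (simp add: divdiff_deriv[OF f'] g_def)
  qed
  have "divdiff f'' xs = (\<Sum>j<n. divdiff f' (xs @ [x j]))"
    unfolding divdiff_deriv[OF f''] xs_def by (rule sum_list_map_map_upt)
  also have "\<dots> = (\<Sum>j<n. (\<Sum>i<n. g i j) + g j j)"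
    by (simp add: extended)
  also have "\<dots> = 2 * (\<Sum>j<n. \<Sum>i\<le>j. g i j)"
    using sum_symmetric_square_diagonal[OF sym] by (simp add: sum.distrib)
  finally show ?thesis
    unfolding g_def .
qed

lemma divdiff_weighted_pair_sum:
  fixes x :: "nat \<Rightarrow> complex" and n :: nat
  assumes f': "\<And>z. (f has_field_derivative f' z) (at z)"
    and f'': "\<And>z. (f' has_field_derivative f'' z) (at z)"
  defines "xs \<equiv> map x [0..<n]"
  shows "(\<Sum>j<n. \<Sum>i\<le>j. x i * divdiff f (xs @ [x i, x j]))
           = divdiff (\<lambda>z. z * f'' z) xs / 2 - (\<Sum>j<n. of_nat j * divdiff f (xs @ [x j]))"
proof -
  have f: "f holomorphic_on UNIV" "f' holomorphic_on UNIV"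
    by (rule holomorphic_on_UNIV_if_has_field_derivative[OF f'])+
  have f''_hol: "f'' holomorphic_on UNIV"
    by (rule holomorphic_on_UNIV_if_has_field_derivative(2)[OF f''])
  define g where "g = (\<lambda>z. z * f z)"
  have g': "(g has_field_derivative f z + z * f' z) (at z)" for z
    unfolding g_def by (auto intro!: derivative_eq_intros f')
  have g'': "((\<lambda>z. f z + z * f' z) has_field_derivative f' z + (f' z + z * f'' z)) (at z)" for z
    by (auto intro!: derivative_eq_intros f' f'')
  have peel: "x i * divdiff f (xs @ [x i, x j]) = divdiff g (xs @ [x i, x j]) - divdiff f (xs @ [x j])"
    for i j
  proof -
    have perm: "mset (xs @ [x i, x j]) = mset (x i # xs @ [x j])"
      by simp
    show ?thesis
      using divdiff_times_id_Cons[OF f(1), of "x i" "xs @ [x j]"]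
      by (simp add: divdiff_mset[OF perm] g_def)
  qed
  have first_order: "divdiff f' xs = (\<Sum>j<n. divdiff f (xs @ [x j]))"
    unfolding divdiff_deriv[OF f'] xs_def by (rule sum_list_map_map_upt)
  have "divdiff (\<lambda>z. f' z + (f' z + z * f'' z)) xs = 2 * divdiff f' xs + divdiff (\<lambda>z. z * f'' z) xs"
    using f f''_hol by (simp add: divdiff_add divdiff_cmult holomorphic_intros)
  then have pairs: "2 * (\<Sum>j<n. \<Sum>i\<le>j. divdiff g (xs @ [x i, x j]))
      = 2 * divdiff f' xs + divdiff (\<lambda>z. z * f'' z) xs"
    using divdiff_second_deriv[OF g' g'', of x n] unfolding xs_def by simp
  have "(\<Sum>j<n. \<Sum>i\<le>j. x i * divdiff f (xs @ [x i, x j]))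
      = (\<Sum>j<n. \<Sum>i\<le>j. divdiff g (xs @ [x i, x j])) - (\<Sum>j<n. of_nat (Suc j) * divdiff f (xs @ [x j]))"
    by (simp add: peel sum_subtractf)
  with pairs show ?thesis
    by (simp add: first_order ring_distribs sum.distrib) algebra
qed

lemma divdiff_exp_weighted_pair_sum:
  fixes x :: "nat \<Rightarrow> complex" and c :: complex and q :: nat
  defines "f \<equiv> \<lambda>z. exp (c * z)" and "xs \<equiv> map x [0..<Suc q]"
  shows "(\<Sum>j\<le>q. \<Sum>i\<le>j. x i * divdiff f (xs @ [x i, x j]))
           = c\<^sup>2 / 2 * (x 0 * divdiff f xs + divdiff f (map x [1..<Suc q]))
             - (\<Sum>i=1..q. of_nat i * divdiff f (xs @ [x i]))"
proof -
  have f': "(f has_field_derivative c * f z) (at z)" for z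
    unfolding f_def by (auto intro!: derivative_eq_intros)
  have f'': "((\<lambda>z. c * f z) has_field_derivative c\<^sup>2 * f z) (at z)" for z
    using f' by (auto intro!: derivative_eq_intros simp: power2_eq_square)
  have f_hol: "f holomorphic_on UNIV"
    unfolding f_def by (intro holomorphic_intros)
  have "xs = x 0 # map x [1..<Suc q]"
    unfolding xs_def by (simp add: upt_conv_Cons del: upt_Suc)
  then have "divdiff (\<lambda>z. z * (c\<^sup>2 * f z)) xs
      = c\<^sup>2 * (x 0 * divdiff f xs + divdiff f (map x [1..<Suc q]))"
    using divdiff_cmult[of "\<lambda>z. z * f z" "c\<^sup>2"] divdiff_times_id_Cons[OF f_hol, of "x 0"] f_hol
    by (simp add: holomorphic_intros mult_ac)
  moreover have "(\<Sum>j<Suc q. of_nat j * h j) = (\<Sum>j=1..q. of_nat j * h j)" for h :: "nat \<Rightarrow> complex"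
    by (induction q) auto
  ultimately show ?thesis
    using divdiff_weighted_pair_sum[OF f' f'', of x "Suc q"] by (simp add: xs_def lessThan_Suc_atMost)
qed

theorem corollary3:
  fixes x :: "nat \<Rightarrow> complex" and q :: nat and \<tau> :: real
  defines "xs \<equiv> map x [0..<Suc q]"
  shows "(\<Sum>j\<le>q. \<Sum>i\<le>j. x i * expdd (-\<tau>) (xs @ [x i, x j])) =
    (if q > 0 then
        complex_of_real (\<tau>^2) * x 0 / 2 * expdd (-\<tau>) xs
        + complex_of_real (\<tau>^2) / 2 * expdd (-\<tau>) (map x [1..<Suc q])
        - (\<Sum>i=1..q. of_nat i * expdd (-\<tau>) (xs @ [x i]))
     else complex_of_real (\<tau>^2) * x 0 / 2 * exp (- complex_of_real \<tau> * x 0))"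
proof -
  define f where "f = (\<lambda>z. exp (complex_of_real (-\<tau>) * z))"
  have f_hol: "f holomorphic_on UNIV"
    unfolding f_def by (intro holomorphic_intros)
  have "expdd (-\<tau>) = divdiff f"
    by (simp add: fun_eq_iff expdd_def f_def)
  moreover have "divdiff f (map x [1..<Suc q]) = 0" "divdiff f xs = exp (- complex_of_real \<tau> * x 0)"
    if "q = 0"
    using that divdiff_Nil[OF f_hol] divdiff_singleton[OF f_hol] by (simp_all add: xs_def f_def)
  ultimately show ?thesis
    using divdiff_exp_weighted_pair_sum[of x "complex_of_real (-\<tau>)" q]
    by (auto simp: f_def xs_def field_simps)
qed

end
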